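(* Let $A$ be a linear Nakayama algebra with simple modules $S_0,\dots,S_{n-1}$, Kupisch series $[c_0,\dots,c_{n-1}]$, and let $d_j=\dim_K D(Ae_j)$. For $0\le i\le n-1$, the indecomposable projective module $e_iA$ has injective dimension equal to one if and only if $c_i<d_{i+c_i-1}$ and $d_{i+c_i-1}-c_i=d_{i-1}$ (with the convention $d_{-1}:=0$).
   Context: $K$ is a field; a linear Nakayama algebra with $n$ simple modules is a connected algebra $A=KQ/I$ with $Q$ the quiver $0\to1\to\cdots\to n-1$ and $I$ admissible; modules are finite-dimensional right modules. $e_iA$ is uniserial with composition factors $S_i,\dots,S_{i+c_i-1}$ from top to socle, $c_i=\dim_K e_iA$. $D=\operatorname{Hom}_K(-,K)$ and $D(Ae_j)$ is the injective envelope of $S_j$. *)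

theory Defs
  imports "Jordan_Normal_Form.Matrix" "HOL-Library.Extended_Nat"
begin

text \<open>
  Finite-dimensional right modules over the linear Nakayama algebra A = KQ/I with
  Q = 0 -> 1 -> ... -> n-1 are modelled (via the standard equivalence mod A = rep(Q,I))
  as representations: a K-vector space K^(dims j) at each vertex j < n and a matrix
  maps j : K^(dims j) -> K^(dims (j+1)) for each arrow j -> j+1 (for a right module M,
  the space at j is M e_j and the arrow acts M e_j -> M e_(j+1)).
  The algebra is given by its Kupisch series c: the admissible ideal I is generated by
  the paths of length c j starting at j (whenever such a path exists).
\<close>

type_synonym 'k rep = "(nat \<Rightarrow> nat) \<times> (nat \<Rightarrow> 'k mat)"

definition dims :: "'k rep \<Rightarrow> nat \<Rightarrow> nat" where "dims X = fst X"
definition maps :: "'k rep \<Rightarrow> nat \<Rightarrow> 'k mat" where "maps X = snd X"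

text \<open>Kupisch series of a connected linear Nakayama algebra with n simples
  (admissible ideal: c i \<ge> 2 for i < n-1).\<close>
definition kupisch_series :: "nat \<Rightarrow> (nat \<Rightarrow> nat) \<Rightarrow> bool" where
  "kupisch_series n c \<longleftrightarrow> n \<ge> 1 \<and> c (n - 1) = 1 \<and>
     (\<forall>i. i + 1 < n \<longrightarrow> c i \<ge> 2 \<and> c i \<le> c (i + 1) + 1)"

fun path_map :: "'k::field rep \<Rightarrow> nat \<Rightarrow> nat \<Rightarrow> 'k mat" where
  "path_map X j 0 = 1\<^sub>m (dims X j)"
| "path_map X j (Suc l) = maps X (j + l) * path_map X j l"

definition is_rep :: "nat \<Rightarrow> (nat \<Rightarrow> nat) \<Rightarrow> 'k::field rep \<Rightarrow> bool" where
  "is_rep n c X \<longleftrightarrow>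
     (\<forall>j. j + 1 < n \<longrightarrow> maps X j \<in> carrier_mat (dims X (j + 1)) (dims X j)) \<and>
     (\<forall>j. j + c j < n \<longrightarrow> path_map X j (c j) = 0\<^sub>m (dims X (j + c j)) (dims X j))"

definition is_hom :: "nat \<Rightarrow> 'k::field rep \<Rightarrow> 'k rep \<Rightarrow> (nat \<Rightarrow> 'k mat) \<Rightarrow> bool" where
  "is_hom n X Y f \<longleftrightarrow>
     (\<forall>j<n. f j \<in> carrier_mat (dims Y j) (dims X j)) \<and>
     (\<forall>j. j + 1 < n \<longrightarrow> maps Y j * f j = f (j + 1) * maps X j)"

definition is_mono :: "nat \<Rightarrow> 'k::field rep \<Rightarrow> (nat \<Rightarrow> 'k mat) \<Rightarrow> bool" where
  "is_mono n X f \<longleftrightarrow>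
     (\<forall>j<n. \<forall>v \<in> carrier_vec (dims X j). f j *\<^sub>v v = 0\<^sub>v (dim_row (f j)) \<longrightarrow> v = 0\<^sub>v (dims X j))"

definition is_epi :: "nat \<Rightarrow> 'k::field rep \<Rightarrow> 'k rep \<Rightarrow> (nat \<Rightarrow> 'k mat) \<Rightarrow> bool" where
  "is_epi n X Y f \<longleftrightarrow>
     (\<forall>j<n. \<forall>w \<in> carrier_vec (dims Y j). \<exists>v \<in> carrier_vec (dims X j). f j *\<^sub>v v = w)"

definition exact_at :: "nat \<Rightarrow> 'k::field rep \<Rightarrow> 'k rep \<Rightarrow> 'k rep \<Rightarrow>
    (nat \<Rightarrow> 'k mat) \<Rightarrow> (nat \<Rightarrow> 'k mat) \<Rightarrow> bool" where
  "exact_at n X Y Z f g \<longleftrightarrow>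
     (\<forall>j<n. \<forall>w \<in> carrier_vec (dims Y j).
        g j *\<^sub>v w = 0\<^sub>v (dims Z j) \<longleftrightarrow> (\<exists>v \<in> carrier_vec (dims X j). f j *\<^sub>v v = w))"

definition is_injective :: "nat \<Rightarrow> (nat \<Rightarrow> nat) \<Rightarrow> 'k::field rep \<Rightarrow> bool" where
  "is_injective n c I \<longleftrightarrow> is_rep n c I \<and>
     (\<forall>X Y f g. is_rep n c X \<longrightarrow> is_rep n c Y \<longrightarrow> is_hom n X Y f \<longrightarrow> is_mono n X f \<longrightarrow>
        is_hom n X I g \<longrightarrow> (\<exists>h. is_hom n Y I h \<and> (\<forall>j<n. h j * f j = g j)))"

definition inj_coresolution :: "nat \<Rightarrow> (nat \<Rightarrow> nat) \<Rightarrow> 'k::field rep \<Rightarrow> nat \<Rightarrow>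
    (nat \<Rightarrow> 'k rep) \<Rightarrow> (nat \<Rightarrow> 'k mat) \<Rightarrow> (nat \<Rightarrow> nat \<Rightarrow> 'k mat) \<Rightarrow> bool" where
  "inj_coresolution n c M k I \<epsilon> \<delta> \<longleftrightarrow>
     (\<forall>i\<le>k. is_injective n c (I i)) \<and>
     is_hom n M (I 0) \<epsilon> \<and> is_mono n M \<epsilon> \<and>
     (\<forall>i<k. is_hom n (I i) (I (Suc i)) (\<delta> i)) \<and>
     (0 < k \<longrightarrow> exact_at n M (I 0) (I 1) \<epsilon> (\<delta> 0)) \<and>
     (\<forall>i. 0 < i \<and> i < k \<longrightarrow> exact_at n (I (i - 1)) (I i) (I (Suc i)) (\<delta> (i - 1)) (\<delta> i)) \<and>
     (if k = 0 then is_epi n M (I 0) \<epsilon> else is_epi n (I (k - 1)) (I k) (\<delta> (k - 1)))"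

definition inj_dim :: "nat \<Rightarrow> (nat \<Rightarrow> nat) \<Rightarrow> 'k::field rep \<Rightarrow> enat" where
  "inj_dim n c M = Inf (enat ` {k. \<exists>I \<epsilon> \<delta>. inj_coresolution n c M k I \<epsilon> \<delta>})"

text \<open>The indecomposable projective e_i A: (e_i A) e_j = e_i A e_j is K (the path i -> j)
  if i \<le> j < i + c i, and 0 otherwise; arrows act by identity.\<close>
definition proj_rep :: "(nat \<Rightarrow> nat) \<Rightarrow> nat \<Rightarrow> 'k::field rep" where
  "proj_rep c i =
     (let d = (\<lambda>j. if i \<le> j \<and> j < i + c i then 1 else 0)
      in (d, \<lambda>j. mat (d (j + 1)) (d j) (\<lambda>_. 1)))"

text \<open>The indecomposable injective D(A e_j): (D(A e_j)) e_i = D(e_i A e_j) is K if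
  i \<le> j < i + c i and 0 otherwise; arrows act by identity.\<close>
definition inj_rep :: "(nat \<Rightarrow> nat) \<Rightarrow> nat \<Rightarrow> 'k::field rep" where
  "inj_rep c j =
     (let d = (\<lambda>i. if i \<le> j \<and> j < i + c i then 1 else 0)
      in (d, \<lambda>i. mat (d (i + 1)) (d i) (\<lambda>_. 1)))"

definition total_dim :: "nat \<Rightarrow> 'k rep \<Rightarrow> nat" where
  "total_dim n X = (\<Sum>j<n. dims X j)"

end

theory Submission
  imports Defs
begin

(*
  The indecomposable modules are the interval modules [p, q] with composition factors
  S_p, ..., S_q. Write t_j = inj_top c j for the least a with j < a + c_a; then
  D(Ae_j) = [t_j, j], so d_j = j + 1 - t_j, and e_iA = [i, k] with k = i + c_i - 1.
  The injective envelope of [i, k] is [t_k, k]. If t_k = i, then e_iA is injective. Otherwise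
  0 -> [i, k] -> [t_k, k] -> [t_k, i - 1] -> 0 is exact, and it is an injective coresolution
  exactly when t_(i-1) = t_k. The two conditions of the theorem say t_k < i and t_(i-1) = t_k.

  For the converse, take a coresolution of length at most one and extend the embedding of
  [i, k] to a map g from [t_k, k]. If t_(i-1) < t_k, then [t_k - 1, i - 1] is a module, and the
  injectivity of the last term, together with a diagram chase, lifts the value of g at the top
  t_k along the arrow from t_k - 1. But the path from t_k - 1 to k is a zero relation, so the
  value of g at the socle S_k vanishes. Since g agrees with the embedding at k, this contradicts
  injectivity.
*)

section \<open>Left inverses of injective matrices\<close>

lemma mult_mat_vec_extend:
  fixes F :: "'a::field mat"
  assumes F: "F \<in> carrier_mat m (Suc p)" and x: "x \<in> carrier_vec p"
  shows "F *\<^sub>v vec (Suc p) (\<lambda>j. if j < p then x $ j else t) =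
         mat m p (\<lambda>(i, j). F $$ (i, j)) *\<^sub>v x + t \<cdot>\<^sub>v col F p"
proof (rule eq_vecI)
  fix i assume "i < dim_vec (mat m p (\<lambda>(i, j). F $$ (i, j)) *\<^sub>v x + t \<cdot>\<^sub>v col F p)"
  hence i: "i < m" using F by simp
  have "(F *\<^sub>v vec (Suc p) (\<lambda>j. if j < p then x $ j else t)) $ i
      = (\<Sum>j<Suc p. F $$ (i, j) * (if j < p then x $ j else t))"
    using F i by (simp add: scalar_prod_def row_def lessThan_atLeast0)
  also have "\<dots> = (\<Sum>j<p. F $$ (i, j) * x $ j) + t * F $$ (i, p)"
    by (auto simp: mult.commute intro!: sum.cong)
  also have "\<dots> = (mat m p (\<lambda>(i, j). F $$ (i, j)) *\<^sub>v x + t \<cdot>\<^sub>v col F p) $ i"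
    using F i x by (simp add: scalar_prod_def row_def lessThan_atLeast0 col_def)
  finally show "(F *\<^sub>v vec (Suc p) (\<lambda>j. if j < p then x $ j else t)) $ i =
     (mat m p (\<lambda>(i, j). F $$ (i, j)) *\<^sub>v x + t \<cdot>\<^sub>v col F p) $ i" .
qed (use F in auto)

lemma minus_vec_eq_zero_imp_eq:
  assumes "u \<in> carrier_vec k" and "x \<in> carrier_vec k" and "u - x = 0\<^sub>v k"
  shows "u = (x :: 'a::ab_group_add vec)"
proof (rule eq_vecI)
  fix i assume "i < dim_vec x"
  hence "(u - x) $ i = 0" using assms by simp
  thus "u $ i = x $ i" using assms(1,2) \<open>i < dim_vec x\<close> by simp
qed (use assms in simp)

lemma separating_functional:
  fixes F G :: "'a::field mat"
  assumes F: "F \<in> carrier_mat m p" and G: "G \<in> carrier_mat p m" and GF: "G * F = 1\<^sub>m p"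
    and u: "u \<in> carrier_vec m" and u_notin: "\<forall>x\<in>carrier_vec p. F *\<^sub>v x \<noteq> u"
  obtains \<psi> where "\<psi> \<in> carrier_vec m" and "\<And>l. l < p \<Longrightarrow> \<psi> \<bullet> col F l = 0" and "\<psi> \<bullet> u = 1"
proof -
  \<comment> \<open>\<open>P\<close> is a projection whose kernel is the column space of \<open>F\<close>.\<close>
  define P where "P = 1\<^sub>m m - F * G"
  have P: "P \<in> carrier_mat m m" unfolding P_def using F G by auto
  have PF: "P * F = 0\<^sub>m m p"
  proof -
    have "P * F = F - F * G * F" unfolding P_def using F G by (simp add: minus_mult_distrib_mat[of _ m m])
    also have "F * G * F = F" using F G GF by (simp add: assoc_mult_mat[of _ m p])
    finally show ?thesis using F by simp
  qed
  have Pu: "P *\<^sub>v u = u - F *\<^sub>v (G *\<^sub>v u)"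
    unfolding P_def using F G u
    by (simp add: minus_mult_distrib_mat_vec[of _ m m] assoc_mult_mat_vec[of _ m p])
  have "P *\<^sub>v u \<noteq> 0\<^sub>v m"
  proof
    assume "P *\<^sub>v u = 0\<^sub>v m"
    hence "u - F *\<^sub>v (G *\<^sub>v u) = 0\<^sub>v m" using Pu by simp
    hence "u = F *\<^sub>v (G *\<^sub>v u)" by (rule minus_vec_eq_zero_imp_eq[rotated 2]) (use F G u in auto)
    hence "F *\<^sub>v (G *\<^sub>v u) = u" ..
    thus False using u_notin G u by auto
  qed
  then obtain k where k: "k < m" "(P *\<^sub>v u) $ k \<noteq> 0"
    using P u by (metis eq_vecI index_zero_vec mult_mat_vec_carrier carrier_vecD)
  let ?\<psi> = "(1 / (P *\<^sub>v u) $ k) \<cdot>\<^sub>v row P k"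
  show thesis
  proof
    show "?\<psi> \<in> carrier_vec m" using P k by simp
    fix l assume l: "l < p"
    have "row P k \<bullet> col F l = (P * F) $$ (k, l)" using P F k l by simp
    thus "?\<psi> \<bullet> col F l = 0" using PF P F k l by (simp add: smult_scalar_prod_distrib[of _ m])
  next
    show "?\<psi> \<bullet> u = 1" using P u k by (simp add: smult_scalar_prod_distrib[of _ m])
  qed
qed

lemma left_inverse_append_col:
  fixes F :: "'a::field mat" and m p :: nat
  defines "F' \<equiv> mat m p (\<lambda>(i, j). F $$ (i, j))"
  assumes F: "F \<in> carrier_mat m (Suc p)" and G': "G' \<in> carrier_mat p m" "G' * F' = 1\<^sub>m p"
    and col_notin: "\<forall>x\<in>carrier_vec p. F' *\<^sub>v x \<noteq> col F p"
  shows "\<exists>G \<in> carrier_mat (Suc p) m. G * F = 1\<^sub>m (Suc p)"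
proof -
  define u where "u = col F p"
  have F': "F' \<in> carrier_mat m p" and u: "u \<in> carrier_vec m" unfolding F'_def u_def using F by auto
  obtain \<psi> where \<psi>: "\<psi> \<in> carrier_vec m" "\<And>l. l < p \<Longrightarrow> \<psi> \<bullet> col F' l = 0" "\<psi> \<bullet> u = 1"
    using separating_functional[OF F' G' u] col_notin unfolding u_def by blast
  define x where "x = G' *\<^sub>v u"
  define G where "G = mat (Suc p) m (\<lambda>(i, j). if i < p then G' $$ (i, j) - x $ i * \<psi> $ j else \<psi> $ j)"
  have row_G: "row G i = (if i < p then row G' i - x $ i \<cdot>\<^sub>v \<psi> else \<psi>)" if "i < Suc p" for i
    unfolding G_def using that G' \<psi> by (intro eq_vecI) auto
  have col_F: "col F l = (if l < p then col F' l else u)" if "l < Suc p" for l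
    unfolding F'_def u_def using that F by (intro eq_vecI) (auto simp: less_Suc_eq)
  have G'F': "row G' i \<bullet> col F' l = 1\<^sub>m p $$ (i, l)" if "i < p" "l < p" for i l
    using G' F' that by (metis index_mult_mat(1) carrier_matD)
  have G'u: "row G' i \<bullet> u = x $ i" if "i < p" for i
    unfolding x_def using G' that by simp
  have "G * F = 1\<^sub>m (Suc p)"
  proof (rule eq_matI)
    fix i l assume "i < dim_row (1\<^sub>m (Suc p) :: 'a mat)" "l < dim_col (1\<^sub>m (Suc p) :: 'a mat)"
    hence i: "i < Suc p" and l: "l < Suc p" by auto
    have "(G * F) $$ (i, l) = row G i \<bullet> col F l" using i l F unfolding G_def by simp
    also have "\<dots> = 1\<^sub>m (Suc p) $$ (i, l)"
      unfolding row_G[OF i] col_F[OF l] using i l G' F' \<psi> u G'F' G'u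
      by (auto simp: minus_scalar_prod_distrib[of _ m] smult_scalar_prod_distrib[of _ m])
    finally show "(G * F) $$ (i, l) = 1\<^sub>m (Suc p) $$ (i, l)" .
  qed (use F in \<open>auto simp: G_def\<close>)
  thus ?thesis unfolding G_def by auto
qed

lemma injective_mat_left_inverse:
  fixes F :: "'a::field mat"
  assumes "F \<in> carrier_mat m p" and "\<forall>v\<in>carrier_vec p. F *\<^sub>v v = 0\<^sub>v m \<longrightarrow> v = 0\<^sub>v p"
  shows "\<exists>G \<in> carrier_mat p m. G * F = 1\<^sub>m p"
  using assms
proof (induction p arbitrary: F)
  case 0
  show ?case by (rule bexI[of _ "0\<^sub>m 0 m"]) (use 0 in auto)
next
  case (Suc p)
  note F = Suc.prems(1)
  define F' where "F' = mat m p (\<lambda>(i, j). F $$ (i, j))"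
  define u where "u = col F p"
  define ext :: "'a vec \<Rightarrow> 'a \<Rightarrow> 'a vec" where "ext x t = vec (Suc p) (\<lambda>j. if j < p then x $ j else t)" for x t
  have F': "F' \<in> carrier_mat m p" and u: "u \<in> carrier_vec m" unfolding F'_def u_def using F by auto
  have ext_zero: "x = 0\<^sub>v p \<and> t = 0" if x: "x \<in> carrier_vec p" and "F' *\<^sub>v x + t \<cdot>\<^sub>v u = 0\<^sub>v m" for x t
  proof -
    have "F *\<^sub>v ext x t = 0\<^sub>v m"
      using mult_mat_vec_extend[OF F x] that unfolding F'_def u_def ext_def by simp
    hence "ext x t = 0\<^sub>v (Suc p)" using Suc.prems(2) unfolding ext_def by simp
    hence entries: "ext x t $ j = 0" if "j < Suc p" for j using that by simp
    have "x $ j = 0" if "j < p" for j using entries[of j] that by (simp add: ext_def)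
    moreover have "t = 0" using entries[of p] by (simp add: ext_def)
    ultimately show ?thesis using x by (auto intro!: eq_vecI)
  qed
  have "\<forall>v\<in>carrier_vec p. F' *\<^sub>v v = 0\<^sub>v m \<longrightarrow> v = 0\<^sub>v p"
  proof -
    have "0 \<cdot>\<^sub>v u = 0\<^sub>v m" using u by (intro eq_vecI) auto
    thus ?thesis using ext_zero[of _ 0] F' by simp
  qed
  with Suc.IH[OF F'] obtain G' where G': "G' \<in> carrier_mat p m" "G' * F' = 1\<^sub>m p" by blast
  have "\<forall>x\<in>carrier_vec p. F' *\<^sub>v x \<noteq> u"
  proof (intro ballI notI)
    fix x assume x: "x \<in> carrier_vec p" and "F' *\<^sub>v x = u"
    hence "F' *\<^sub>v x + (-1) \<cdot>\<^sub>v u = 0\<^sub>v m" using u by (intro eq_vecI) auto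
    thus False using ext_zero[OF x, of "-1"] by simp
  qed
  thus ?case using left_inverse_append_col[OF F] G' unfolding F'_def u_def by blast
qed

lemma carrier_mat_zero_rows_eq: "A \<in> carrier_mat 0 k \<Longrightarrow> B \<in> carrier_mat 0 k \<Longrightarrow> A = B"
  by (rule eq_matI) auto

lemma carrier_mat_zero_cols_eq: "A \<in> carrier_mat k 0 \<Longrightarrow> B \<in> carrier_mat k 0 \<Longrightarrow> A = B"
  by (rule eq_matI) auto

lemma mult_mat_vec_zero_cols: "A \<in> carrier_mat k 0 \<Longrightarrow> v \<in> carrier_vec 0 \<Longrightarrow> A *\<^sub>v v = 0\<^sub>v k"
  by (rule eq_vecI) (auto simp: scalar_prod_def)

lemma mult_mat_zero_vec: "A \<in> carrier_mat k m \<Longrightarrow> A *\<^sub>v 0\<^sub>v m = (0\<^sub>v k :: 'a::field vec)"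
  by (rule eq_vecI) (auto simp: scalar_prod_def)

lemma mat_one_one [simp]: "mat (Suc 0) (Suc 0) (\<lambda>_. 1) = (1\<^sub>m (Suc 0) :: 'a::field mat)"
  by (rule eq_matI) auto

lemma mult_mat_of_cols_single:
  "A \<in> carrier_mat k m \<Longrightarrow> v \<in> carrier_vec m \<Longrightarrow> A * mat_of_cols m [v] = mat_of_cols k [A *\<^sub>v v]"
  by (rule eq_matI) (auto simp: mat_of_cols_def scalar_prod_def)

lemma mat_of_cols_single_mult_unit_vec: "mat_of_cols (dim_vec v) [v] *\<^sub>v unit_vec 1 0 = (v :: 'a::field vec)"
  by (rule eq_vecI) (auto simp: mat_of_cols_def scalar_prod_def unit_vec_def)

lemma mat_of_cols_zero_vec: "mat_of_cols k [0\<^sub>v k] = (0\<^sub>m k 1 :: 'a::field mat)"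
  by (rule eq_matI) (auto simp: mat_of_cols_def)

section \<open>Kupisch series and paths in representations\<close>

lemma kupisch_series_pos:
  assumes "kupisch_series n c" and "j < n"
  shows "1 \<le> c j"
proof (cases "j + 1 < n")
  case False
  hence "j = n - 1" using assms(2) by simp
  thus ?thesis using assms(1) unfolding kupisch_series_def by simp
qed (use assms in \<open>auto simp: kupisch_series_def\<close>)

lemma kupisch_series_end_mono:
  assumes ks: "kupisch_series n c" and "a \<le> b" and "b < n"
  shows "a + c a \<le> b + c b"
  using assms(2,3)
proof (induction b)
  case (Suc b)
  show ?case
  proof (cases "a = Suc b")
    case False
    hence "a + c a \<le> b + c b" using Suc by simp
    moreover have "c b \<le> c (b + 1) + 1" using ks Suc.prems unfolding kupisch_series_def by simp
    ultimately show ?thesis by simp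
  qed simp
qed simp

lemma kupisch_series_end_le:
  assumes ks: "kupisch_series n c" and "j < n"
  shows "j + c j \<le> n"
proof -
  have "j + c j \<le> (n - 1) + c (n - 1)" using kupisch_series_end_mono[OF ks, of j "n - 1"] assms(2) by simp
  thus ?thesis using ks unfolding kupisch_series_def by simp
qed

definition inj_top :: "(nat \<Rightarrow> nat) \<Rightarrow> nat \<Rightarrow> nat" where
  "inj_top c j = (LEAST a. j < a + c a)"

lemma inj_top_le_iff:
  assumes ks: "kupisch_series n c" and j: "j < n"
  shows "inj_top c j \<le> a \<longleftrightarrow> j < a + c a"
proof
  assume "j < a + c a"
  thus "inj_top c j \<le> a" unfolding inj_top_def by (rule Least_le)
next
  have "j < j + c j" using kupisch_series_pos[OF ks j] by simp
  hence top: "j < inj_top c j + c (inj_top c j)" unfolding inj_top_def by (rule LeastI)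
  assume le: "inj_top c j \<le> a"
  show "j < a + c a"
  proof (cases "a \<le> j")
    case True
    hence "inj_top c j + c (inj_top c j) \<le> a + c a"
      using le j by (intro kupisch_series_end_mono[OF ks]) auto
    thus ?thesis using top by simp
  qed simp
qed

lemma inj_top_le: "kupisch_series n c \<Longrightarrow> j < n \<Longrightarrow> inj_top c j \<le> j"
  using inj_top_le_iff kupisch_series_pos by fastforce

lemma is_rep_maps_carrier:
  "is_rep n c X \<Longrightarrow> Suc l < n \<Longrightarrow> maps X l \<in> carrier_mat (dims X (Suc l)) (dims X l)"
  unfolding is_rep_def by simp

lemma is_hom_carrier:
  "is_hom n X Y f \<Longrightarrow> l < n \<Longrightarrow> f l \<in> carrier_mat (dims Y l) (dims X l)"
  unfolding is_hom_def by simp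

lemma is_hom_commute:
  "is_hom n X Y f \<Longrightarrow> Suc l < n \<Longrightarrow> maps Y l * f l = f (Suc l) * maps X l"
  unfolding is_hom_def by simp

lemma path_map_carrier:
  assumes X: "is_rep n c X" and "l + m < n"
  shows "path_map X l m \<in> carrier_mat (dims X (l + m)) (dims X l)"
  using assms(2)
proof (induction m)
  case (Suc m)
  thus ?case using is_rep_maps_carrier[OF X, of "l + m"] by fastforce
qed simp

lemma path_map_add:
  assumes X: "is_rep n c X" and "l + m1 + m2 < n"
  shows "path_map X l (m1 + m2) = path_map X (l + m1) m2 * path_map X l m1"
  using assms(2)
proof (induction m2)
  case 0
  thus ?case using path_map_carrier[OF X, of l m1] by simp
next
  case (Suc m2)
  have P1: "path_map X l m1 \<in> carrier_mat (dims X (l + m1)) (dims X l)"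
    using path_map_carrier[OF X] Suc.prems by simp
  have P2: "path_map X (l + m1) m2 \<in> carrier_mat (dims X (l + m1 + m2)) (dims X (l + m1))"
    using path_map_carrier[OF X, of "l + m1" m2] Suc.prems by simp
  have M: "maps X (l + m1 + m2) \<in> carrier_mat (dims X (Suc (l + m1 + m2))) (dims X (l + m1 + m2))"
    using is_rep_maps_carrier[OF X] Suc.prems by simp
  have "path_map X l (m1 + Suc m2) = maps X (l + m1 + m2) * (path_map X (l + m1) m2 * path_map X l m1)"
    using Suc by (simp add: add.assoc)
  also have "\<dots> = path_map X (l + m1) (Suc m2) * path_map X l m1"
    using assoc_mult_mat[OF M P2 P1] by (simp add: add.assoc)
  finally show ?case .
qed

lemma path_map_Suc_left:
  assumes X: "is_rep n c X" and "l + Suc m < n"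
  shows "path_map X l (Suc m) = path_map X (Suc l) m * maps X l"
  using path_map_add[OF X, of l 1 m] is_rep_maps_carrier[OF X, of l] assms(2) by simp

lemma path_map_hom_commute:
  assumes X: "is_rep n c X" and Y: "is_rep n c Y" and f: "is_hom n X Y f" and "l + m < n"
  shows "f (l + m) * path_map X l m = path_map Y l m * f l"
  using assms(4)
proof (induction m)
  case 0
  thus ?case using is_hom_carrier[OF f, of l] by simp
next
  case (Suc m)
  have fl: "f l \<in> carrier_mat (dims Y l) (dims X l)"
    and fm: "f (l + m) \<in> carrier_mat (dims Y (l + m)) (dims X (l + m))"
    and fm1: "f (Suc (l + m)) \<in> carrier_mat (dims Y (Suc (l + m))) (dims X (Suc (l + m)))"
    using is_hom_carrier[OF f] Suc.prems by auto
  have MX: "maps X (l + m) \<in> carrier_mat (dims X (Suc (l + m))) (dims X (l + m))"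
    and MY: "maps Y (l + m) \<in> carrier_mat (dims Y (Suc (l + m))) (dims Y (l + m))"
    using is_rep_maps_carrier[OF X] is_rep_maps_carrier[OF Y] Suc.prems by auto
  have PX: "path_map X l m \<in> carrier_mat (dims X (l + m)) (dims X l)"
    and PY: "path_map Y l m \<in> carrier_mat (dims Y (l + m)) (dims Y l)"
    using path_map_carrier[OF X] path_map_carrier[OF Y] Suc.prems by auto
  have "f (l + Suc m) * path_map X l (Suc m) = (f (Suc (l + m)) * maps X (l + m)) * path_map X l m"
    using assoc_mult_mat[OF fm1 MX PX] by simp
  also have "\<dots> = maps Y (l + m) * (f (l + m) * path_map X l m)"
    using is_hom_commute[OF f, of "l + m"] Suc.prems assoc_mult_mat[OF MY fm PX] by simp
  also have "\<dots> = path_map Y l (Suc m) * f l"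
    using Suc assoc_mult_mat[OF MY PY fl] by simp
  finally show ?case .
qed

lemma path_map_eq_zero:
  assumes X: "is_rep n c X" and "l + c l \<le> q" and "q < n"
  shows "path_map X l (q - l) = 0\<^sub>m (dims X q) (dims X l)"
proof -
  have "path_map X l (q - l) = path_map X (l + c l) (q - l - c l) * path_map X l (c l)"
    using path_map_add[OF X, of l "c l" "q - l - c l"] assms(2,3) by (simp add: le_add_diff_inverse)
  also have "path_map X l (c l) = 0\<^sub>m (dims X (l + c l)) (dims X l)"
    using X assms(2,3) unfolding is_rep_def by simp
  finally show ?thesis
    using path_map_carrier[OF X, of "l + c l" "q - l - c l"] assms(2,3) by simp
qed

section \<open>Interval modules\<close>

definition interval_dim :: "nat \<Rightarrow> nat \<Rightarrow> nat \<Rightarrow> nat" where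
  "interval_dim p q l = (if p \<le> l \<and> l \<le> q then 1 else 0)"

definition interval_rep :: "nat \<Rightarrow> nat \<Rightarrow> 'k::field rep" where
  "interval_rep p q = (interval_dim p q, \<lambda>l. mat (interval_dim p q (Suc l)) (interval_dim p q l) (\<lambda>_. 1))"

definition interval_map :: "nat \<Rightarrow> nat \<Rightarrow> nat \<Rightarrow> nat \<Rightarrow> nat \<Rightarrow> 'k::field mat" where
  "interval_map p q p' q' l = mat (interval_dim p' q' l) (interval_dim p q l) (\<lambda>_. 1)"

lemma dims_interval_rep [simp]: "dims (interval_rep p q) = interval_dim p q"
  unfolding interval_rep_def dims_def by simp

lemma maps_interval_rep [simp]:
  "maps (interval_rep p q) l = mat (interval_dim p q (Suc l)) (interval_dim p q l) (\<lambda>_. 1)"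
  unfolding interval_rep_def maps_def by simp

lemma path_map_interval_rep:
  "path_map (interval_rep p q :: 'k::field rep) l m = mat (interval_dim p q (l + m)) (interval_dim p q l) (\<lambda>_. 1)"
  by (induction m) (auto intro!: eq_matI simp: interval_dim_def scalar_prod_def)

lemma interval_rep_is_rep:
  assumes ks: "kupisch_series n c" and "q < n" and "q < p + c p"
  shows "is_rep n c (interval_rep p q :: 'k::field rep)"
  unfolding is_rep_def
proof (intro conjI allI impI)
  fix j assume j: "j + c j < n"
  have "\<not> (p \<le> j \<and> j + c j \<le> q)"
    using kupisch_series_end_mono[OF ks, of p j] j assms(3) by auto
  thus "path_map (interval_rep p q :: 'k rep) j (c j) =
      0\<^sub>m (dims (interval_rep p q :: 'k rep) (j + c j)) (dims (interval_rep p q :: 'k rep) j)"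
    unfolding path_map_interval_rep by (intro eq_matI) (auto simp: interval_dim_def)
qed simp

lemma interval_map_hom:
  assumes "p' \<le> p" and "q' \<le> q"
  shows "is_hom n (interval_rep p q :: 'k::field rep) (interval_rep p' q') (interval_map p q p' q')"
  unfolding is_hom_def interval_map_def using assms
  by (auto intro!: eq_matI simp: interval_dim_def scalar_prod_def)

lemma interval_map_mono:
  assumes "p' \<le> p" and "q \<le> q'"
  shows "is_mono n (interval_rep p q :: 'k::field rep) (interval_map p q p' q')"
  unfolding is_mono_def interval_map_def using assms
  by (auto simp: interval_dim_def)

lemma interval_map_epi:
  assumes "p \<le> p'" and "q' \<le> q"
  shows "is_epi n (interval_rep p q :: 'k::field rep) (interval_rep p' q') (interval_map p q p' q')"
  unfolding is_epi_def
proof (intro allI impI ballI)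
  fix j and w :: "'k vec" assume "w \<in> carrier_vec (dims (interval_rep p' q' :: 'k rep) j)"
  thus "\<exists>v\<in>carrier_vec (dims (interval_rep p q :: 'k rep) j). interval_map p q p' q' j *\<^sub>v v = w"
    using assms unfolding interval_map_def
    by (cases "p' \<le> j \<and> j \<le> q'") (auto simp: interval_dim_def intro!: bexI[of _ "0\<^sub>v (interval_dim p q j)"])
qed

lemma total_dim_interval_rep:
  assumes "q < n"
  shows "total_dim n (interval_rep p q :: 'k::field rep) = Suc q - p"
proof -
  have "total_dim n (interval_rep p q :: 'k rep) = card ({..<n} \<inter> {p..q})"
    unfolding total_dim_def by (simp add: interval_dim_def sum.If_cases Int_def)
  also have "{..<n} \<inter> {p..q} = {p..q}" using assms by auto
  finally show ?thesis by simp
qed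

lemma inj_rep_eq_interval_rep:
  assumes "kupisch_series n c" and "j < n"
  shows "inj_rep c j = interval_rep (inj_top c j) j"
proof -
  have "(\<lambda>i. if i \<le> j \<and> j < i + c i then 1 else 0) = interval_dim (inj_top c j) j"
    using inj_top_le_iff[OF assms] by (intro ext) (auto simp: interval_dim_def)
  thus ?thesis unfolding inj_rep_def interval_rep_def by (simp add: Let_def)
qed

lemma proj_rep_eq_interval_rep:
  assumes "1 \<le> c i"
  shows "proj_rep c i = interval_rep i (i + c i - 1)"
proof -
  have "(\<lambda>j. if i \<le> j \<and> j < i + c i then 1 else 0) = interval_dim i (i + c i - 1)"
    using assms by (intro ext) (auto simp: interval_dim_def)
  thus ?thesis unfolding proj_rep_def interval_rep_def by (simp add: Let_def)
qed

lemma interval_hom_path_map: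
  fixes X :: "'k::field rep"
  assumes I: "is_rep n c (interval_rep a k :: 'k rep)" and X: "is_rep n c X"
    and g: "is_hom n (interval_rep a k) X g" and "a \<le> l" and "l + m \<le> k" and "k < n"
  shows "g (l + m) = path_map X l m * g l"
proof -
  have "g (l + m) * path_map (interval_rep a k :: 'k rep) l m = path_map X l m * g l"
    using path_map_hom_commute[OF I X g, of l m] assms(4-6) by simp
  moreover have "g (l + m) \<in> carrier_mat (dims X (l + m)) 1"
    using is_hom_carrier[OF g, of "l + m"] assms(4-6) by (simp add: interval_dim_def)
  ultimately show ?thesis using assms(4,5) by (simp add: path_map_interval_rep interval_dim_def)
qed

lemma interval_hom_from_vec:
  assumes Z: "is_rep n c Z" and "p \<le> q" and "q < n" and z: "z \<in> carrier_vec (dims Z p)"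
    and z_killed: "Suc q < n \<Longrightarrow> path_map Z p (Suc q - p) *\<^sub>v z = 0\<^sub>v (dims Z (Suc q))"
  obtains \<phi> where "is_hom n (interval_rep p q :: 'k::field rep) Z \<phi>" and "\<phi> p *\<^sub>v unit_vec 1 0 = z"
proof
  define \<phi> where "\<phi> l = (if p \<le> l \<and> l \<le> q then mat_of_cols (dims Z l) [path_map Z p (l - p) *\<^sub>v z]
    else 0\<^sub>m (dims Z l) 0)" for l
  have \<phi>_carrier: "\<phi> l \<in> carrier_mat (dims Z l) (interval_dim p q l)" for l
    unfolding \<phi>_def interval_dim_def mat_of_cols_def by simp
  have maps_\<phi>: "maps Z l * \<phi> l = mat_of_cols (dims Z (Suc l)) [path_map Z p (Suc l - p) *\<^sub>v z]"
    if "p \<le> l" "l \<le> q" "Suc l < n" for l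
  proof -
    have "path_map Z p (l - p) \<in> carrier_mat (dims Z l) (dims Z p)"
      using path_map_carrier[OF Z, of p "l - p"] that by simp
    thus ?thesis using that z is_rep_maps_carrier[OF Z, of l]
      by (simp add: \<phi>_def mult_mat_of_cols_single Suc_diff_le)
  qed
  show "is_hom n (interval_rep p q :: 'k rep) Z \<phi>"
    unfolding is_hom_def
  proof (intro conjI allI impI)
    fix l assume l: "l + 1 < n"
    consider "p \<le> l" "l < q" | "l = q" | "interval_dim p q l = 0" by (fastforce simp: interval_dim_def)
    thus "maps Z l * \<phi> l = \<phi> (l + 1) * maps (interval_rep p q) l"
    proof cases
      case 1
      thus ?thesis using maps_\<phi>[of l] l \<phi>_carrier[of "Suc l"] by (simp add: \<phi>_def interval_dim_def)
    next
      case 2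
      hence "maps Z l * \<phi> l = 0\<^sub>m (dims Z (Suc l)) 1"
        using maps_\<phi>[of l] z_killed assms(2) l by (simp add: mat_of_cols_zero_vec)
      thus ?thesis using 2 assms(2) by (auto intro!: eq_matI simp: \<phi>_def interval_dim_def)
    next
      case 3
      thus ?thesis using is_rep_maps_carrier[OF Z, of l] \<phi>_carrier[of l] \<phi>_carrier[of "Suc l"] l
        by (intro carrier_mat_zero_cols_eq[of _ "dims Z (Suc l)"]) auto
    qed
  qed (use \<phi>_carrier in simp)
  show "\<phi> p *\<^sub>v unit_vec 1 0 = z"
    using assms(2) z mat_of_cols_single_mult_unit_vec[of z] by (simp add: \<phi>_def)
qed

lemma interval_hom_from_functional:
  assumes Y: "is_rep n c Y" and "a \<le> j" and "j < n" and zero: "\<forall>l<a. l + c l \<le> j"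
    and \<Phi>: "\<Phi> \<in> carrier_mat 1 (dims Y j)"
  shows "is_hom n Y (interval_rep a j :: 'k::field rep)
           (\<lambda>l. if a \<le> l \<and> l \<le> j then \<Phi> * path_map Y l (j - l) else 0\<^sub>m 0 (dims Y l))"
    (is "is_hom n Y _ ?h")
proof -
  have path_carrier: "path_map Y l (j - l) \<in> carrier_mat (dims Y j) (dims Y l)" if "l \<le> j" for l
    using path_map_carrier[OF Y, of l "j - l"] that assms(3) by simp
  have h_carrier: "?h l \<in> carrier_mat (interval_dim a j l) (dims Y l)" for l
    using \<Phi> path_carrier[of l] by (simp add: interval_dim_def)
  show ?thesis unfolding is_hom_def
  proof (intro conjI allI impI)
    fix l assume l: "l + 1 < n"
    have M: "maps Y l \<in> carrier_mat (dims Y (Suc l)) (dims Y l)" using is_rep_maps_carrier[OF Y] l by simp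
    have peel: "path_map Y l (j - l) = path_map Y (Suc l) (j - Suc l) * maps Y l" if "l < j"
      using path_map_Suc_left[OF Y, of l "j - Suc l"] that assms(3) by (simp add: Suc_diff_Suc)
    have h_Suc: "?h (Suc l) * maps Y l = \<Phi> * path_map Y l (j - l)" if "a \<le> Suc l" "l < j"
      using that peel assoc_mult_mat[OF \<Phi> path_carrier[of "Suc l"] M] by simp
    consider "a \<le> l" "l < j" | "Suc l = a" | "interval_dim a j (Suc l) = 0"
      by (fastforce simp: interval_dim_def)
    thus "maps (interval_rep a j) l * ?h l = ?h (l + 1) * maps Y l"
    proof cases
      case 1
      hence "?h l \<in> carrier_mat 1 (dims Y l)" using h_carrier[of l] by (simp add: interval_dim_def)
      thus ?thesis using 1 h_Suc left_mult_one_mat by (simp add: interval_dim_def)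
    next
      case 2
      have "\<Phi> * path_map Y l (j - l) = 0\<^sub>m 1 (dims Y l)"
        using path_map_eq_zero[OF Y _ assms(3), of l] zero 2 \<Phi> by auto
      thus ?thesis using 2 h_Suc assms(2) by (auto intro!: eq_matI simp: interval_dim_def)
    next
      case 3
      have "maps (interval_rep a j) l * ?h l \<in> carrier_mat 0 (dims Y l)"
        using 3 mult_carrier_mat[OF _ h_carrier[of l], of _ 0] by simp
      moreover have "?h (Suc l) * maps Y l \<in> carrier_mat 0 (dims Y l)"
        using mult_carrier_mat[OF h_carrier[of "Suc l"] M] unfolding 3 .
      ultimately show ?thesis unfolding Suc_eq_plus1 maps_interval_rep by (rule carrier_mat_zero_rows_eq)
    qed
  qed (use h_carrier in simp)
qed

lemma interval_rep_inj_top_injective: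
  assumes ks: "kupisch_series n c" and j: "j < n"
  shows "is_injective n c (interval_rep (inj_top c j) j :: 'k::field rep)"
  unfolding is_injective_def
proof (intro conjI allI impI)
  let ?a = "inj_top c j"
  show I: "is_rep n c (interval_rep ?a j :: 'k rep)"
    by (rule interval_rep_is_rep[OF ks j]) (simp add: inj_top_le_iff[OF ks j, symmetric])
  fix X Y :: "'k rep" and f g
  assume X: "is_rep n c X" and Y: "is_rep n c Y" and f: "is_hom n X Y f" and f_mono: "is_mono n X f"
    and g: "is_hom n X (interval_rep ?a j) g"
  have fj: "f j \<in> carrier_mat (dims Y j) (dims X j)" using is_hom_carrier[OF f j] .
  have gj: "g j \<in> carrier_mat 1 (dims X j)"
    using is_hom_carrier[OF g j] inj_top_le[OF ks j] by (simp add: interval_dim_def)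
  obtain \<Phi> where \<Phi>: "\<Phi> \<in> carrier_mat 1 (dims Y j)" and \<Phi>f: "\<Phi> * f j = g j"
  proof -
    obtain G where G: "G \<in> carrier_mat (dims X j) (dims Y j)" and Gf: "G * f j = 1\<^sub>m (dims X j)"
      using injective_mat_left_inverse[OF fj] f_mono j fj unfolding is_mono_def by auto
    thus thesis using that[of "g j * G"] assoc_mult_mat[OF gj G fj] gj by simp
  qed
  define h where "h l = (if ?a \<le> l \<and> l \<le> j then \<Phi> * path_map Y l (j - l) else 0\<^sub>m 0 (dims Y l))" for l
  show "\<exists>h. is_hom n Y (interval_rep ?a j) h \<and> (\<forall>l<n. h l * f l = g l)"
  proof (intro exI conjI allI impI)
    show "is_hom n Y (interval_rep ?a j) h"
      unfolding h_def using inj_top_le_iff[OF ks j] inj_top_le[OF ks j] j \<Phi>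
      by (intro interval_hom_from_functional[OF Y]) (auto simp: not_less[symmetric])
    fix l assume l: "l < n"
    show "h l * f l = g l"
    proof (cases "?a \<le> l \<and> l \<le> j")
      case True
      have PX: "path_map X l (j - l) \<in> carrier_mat (dims X j) (dims X l)"
        and PY: "path_map Y l (j - l) \<in> carrier_mat (dims Y j) (dims Y l)"
        using path_map_carrier[OF X, of l "j - l"] path_map_carrier[OF Y, of l "j - l"] True j by auto
      have "h l * f l = \<Phi> * (path_map Y l (j - l) * f l)"
        using True assoc_mult_mat[OF \<Phi> PY is_hom_carrier[OF f l]] by (simp add: h_def)
      also have "path_map Y l (j - l) * f l = f j * path_map X l (j - l)"
        using path_map_hom_commute[OF X Y f, of l "j - l"] True j by simp
      also have "\<Phi> * (f j * path_map X l (j - l)) = g j * path_map X l (j - l)"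
        using assoc_mult_mat[OF \<Phi> fj PX] \<Phi>f by simp
      also have "\<dots> = g l"
        using path_map_hom_commute[OF X I g, of l "j - l"] True j is_hom_carrier[OF g l]
        by (simp add: path_map_interval_rep interval_dim_def)
      finally show ?thesis .
    next
      case False
      thus ?thesis using is_hom_carrier[OF g l] is_hom_carrier[OF f l]
        by (intro carrier_mat_zero_rows_eq[of _ "dims X l"]) (auto simp: h_def interval_dim_def)
    qed
  qed
qed

section \<open>Injective coresolutions of interval modules\<close>

lemma injective_extend_from_interval:
  assumes ks: "kupisch_series n c" and I: "is_injective n c I"
    and "a \<le> p" and "p \<le> q" and "q < n" and "q < a + c a"
    and \<epsilon>: "is_hom n (interval_rep p q :: 'k::field rep) I \<epsilon>"
  obtains g where "is_hom n (interval_rep a q) I g" and "\<And>l. p \<le> l \<Longrightarrow> l \<le> q \<Longrightarrow> g l = \<epsilon> l"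
proof -
  have "a + c a \<le> p + c p" using kupisch_series_end_mono[OF ks, of a p] assms(3-5) by simp
  hence reps: "is_rep n c (interval_rep p q :: 'k rep)" "is_rep n c (interval_rep a q :: 'k rep)"
    using interval_rep_is_rep[OF ks assms(5), of p] interval_rep_is_rep[OF ks assms(5), of a] assms(6)
    by simp_all
  obtain g where g: "is_hom n (interval_rep a q) I g" and g\<epsilon>: "\<forall>l<n. g l * interval_map p q a q l = \<epsilon> l"
    using I reps interval_map_hom[of a p q q n] interval_map_mono[of a p q q n] \<epsilon> assms(3)
    unfolding is_injective_def by blast
  show thesis
  proof (rule that[OF g])
    fix l assume "p \<le> l" "l \<le> q"
    thus "g l = \<epsilon> l" using g\<epsilon>[rule_format, of l] is_hom_carrier[OF g, of l] assms(3,5)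
      by (simp add: interval_map_def interval_dim_def)
  qed
qed

lemma interval_mono_nonzero:
  assumes "is_mono n (interval_rep p q :: 'k::field rep) \<epsilon>" and "p \<le> l" and "l \<le> q" and "l < n"
  shows "\<epsilon> l *\<^sub>v unit_vec 1 0 \<noteq> 0\<^sub>v (dim_row (\<epsilon> l))"
proof
  have "unit_vec 1 0 \<in> carrier_vec (dims (interval_rep p q :: 'k rep) l)"
    using assms(2,3) by (simp add: interval_dim_def)
  moreover assume "\<epsilon> l *\<^sub>v unit_vec 1 0 = 0\<^sub>v (dim_row (\<epsilon> l))"
  ultimately have "unit_vec 1 0 = (0\<^sub>v (dims (interval_rep p q :: 'k rep) l) :: 'k vec)"
    using assms(1,4) unfolding is_mono_def by blast
  hence "unit_vec 1 0 = (0\<^sub>v 1 :: 'k vec)" using assms(2,3) by (simp add: interval_dim_def)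
  thus False by simp
qed

lemma injective_vec_in_image_of_maps:
  assumes ks: "kupisch_series n c" and I: "is_injective n c (I :: 'k::field rep)"
    and "Suc a \<le> q" and "q < n" and "q < a + c a" and z: "z \<in> carrier_vec (dims I (Suc a))"
    and z_killed: "Suc q < n \<Longrightarrow> path_map I (Suc a) (q - a) *\<^sub>v z = 0\<^sub>v (dims I (Suc q))"
  obtains s where "s \<in> carrier_vec (dims I a)" and "maps I a *\<^sub>v s = z"
proof -
  have I_rep: "is_rep n c I" using I unfolding is_injective_def by simp
  obtain \<phi> where \<phi>: "is_hom n (interval_rep (Suc a) q :: 'k rep) I \<phi>" and \<phi>z: "\<phi> (Suc a) *\<^sub>v unit_vec 1 0 = z"
    using interval_hom_from_vec[OF I_rep assms(3,4) z] z_killed by auto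
  obtain g where g: "is_hom n (interval_rep a q) I g" and g\<phi>: "g (Suc a) = \<phi> (Suc a)"
    using injective_extend_from_interval[OF ks I _ assms(3-5) \<phi>] assms(3) by auto
  have ga: "g a \<in> carrier_mat (dims I a) 1"
    using is_hom_carrier[OF g, of a] assms(3,4) by (simp add: interval_dim_def)
  have "maps I a * g a = g (Suc a)"
    using is_hom_commute[OF g, of a] assms(3,4) is_hom_carrier[OF g, of "Suc a"]
    by (simp add: interval_dim_def)
  moreover have "maps I a *\<^sub>v (g a *\<^sub>v unit_vec 1 0) = (maps I a * g a) *\<^sub>v unit_vec 1 0"
    using is_rep_maps_carrier[OF I_rep, of a] ga assms(3,4) by simp
  ultimately have "maps I a *\<^sub>v (g a *\<^sub>v unit_vec 1 0) = z" using g\<phi> \<phi>z by simp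
  thus thesis using that mult_mat_vec_carrier[OF ga, of "unit_vec 1 0"] by simp
qed

lemma exact_lift_along_maps:
  assumes I0: "is_rep n c I0" and I1: "is_rep n c I1"
    and \<epsilon>: "is_hom n M I0 \<epsilon>" and \<delta>: "is_hom n I0 I1 \<delta>" and \<delta>_epi: "is_epi n I0 I1 \<delta>"
    and exact: "exact_at n M I0 I1 \<epsilon> \<delta>" and M0: "dims M (Suc a) = 0" and a: "Suc a < n"
    and x: "x \<in> carrier_vec (dims I0 (Suc a))" and s: "s \<in> carrier_vec (dims I1 a)"
    and s_x: "maps I1 a *\<^sub>v s = \<delta> (Suc a) *\<^sub>v (x :: 'k::field vec)"
  obtains y where "y \<in> carrier_vec (dims I0 a)" and "maps I0 a *\<^sub>v y = x"
proof -
  obtain y where y: "y \<in> carrier_vec (dims I0 a)" and \<delta>y: "\<delta> a *\<^sub>v y = s"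
    using \<delta>_epi s a unfolding is_epi_def by (meson Suc_lessD)
  have maps0: "maps I0 a \<in> carrier_mat (dims I0 (Suc a)) (dims I0 a)"
    and maps1: "maps I1 a \<in> carrier_mat (dims I1 (Suc a)) (dims I1 a)"
    using is_rep_maps_carrier[OF I0] is_rep_maps_carrier[OF I1] a by auto
  have \<delta>a: "\<delta> a \<in> carrier_mat (dims I1 a) (dims I0 a)"
    and \<delta>Sa: "\<delta> (Suc a) \<in> carrier_mat (dims I1 (Suc a)) (dims I0 (Suc a))"
    using is_hom_carrier[OF \<delta>] a by auto
  let ?w = "maps I0 a *\<^sub>v y - x"
  have w: "?w \<in> carrier_vec (dims I0 (Suc a))" using maps0 y x by simp
  have "\<delta> (Suc a) *\<^sub>v (maps I0 a *\<^sub>v y) = maps I1 a *\<^sub>v (\<delta> a *\<^sub>v y)"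
    using is_hom_commute[OF \<delta> a] maps0 maps1 \<delta>a \<delta>Sa y
    by (metis assoc_mult_mat_vec)
  hence "\<delta> (Suc a) *\<^sub>v ?w = 0\<^sub>v (dims I1 (Suc a))"
    using \<delta>y s_x mult_minus_distrib_mat_vec[OF \<delta>Sa _ x, of "maps I0 a *\<^sub>v y"] maps0 y \<delta>Sa x by simp
  then obtain v where v: "v \<in> carrier_vec 0" and "\<epsilon> (Suc a) *\<^sub>v v = ?w"
    using exact w a M0 unfolding exact_at_def by auto
  hence "?w = 0\<^sub>v (dims I0 (Suc a))"
    using mult_mat_vec_zero_cols[OF _ v] is_hom_carrier[OF \<epsilon> a] M0 by metis
  thus thesis using that y minus_vec_eq_zero_imp_eq[OF _ x] maps0 by simp
qed

lemma inj_coresolution_0_iff: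
  "inj_coresolution n c M 0 I \<epsilon> \<delta> \<longleftrightarrow>
     is_injective n c (I 0) \<and> is_hom n M (I 0) \<epsilon> \<and> is_mono n M \<epsilon> \<and> is_epi n M (I 0) \<epsilon>"
  unfolding inj_coresolution_def by simp

lemma inj_coresolution_1_iff:
  "inj_coresolution n c M 1 I \<epsilon> \<delta> \<longleftrightarrow>
     is_injective n c (I 0) \<and> is_injective n c (I 1) \<and> is_hom n M (I 0) \<epsilon> \<and> is_mono n M \<epsilon> \<and>
     is_hom n (I 0) (I 1) (\<delta> 0) \<and> exact_at n M (I 0) (I 1) \<epsilon> (\<delta> 0) \<and> is_epi n (I 0) (I 1) (\<delta> 0)"
  unfolding inj_coresolution_def by (auto simp: le_Suc_eq)

lemma injective_inj_coresolution_0: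
  assumes "is_injective n c M"
  shows "inj_coresolution n c M 0 (\<lambda>_. M) (\<lambda>l. 1\<^sub>m (dims M l)) \<delta>"
proof -
  have "is_rep n c M" using assms unfolding is_injective_def by simp
  thus ?thesis using assms unfolding inj_coresolution_0_iff is_hom_def is_mono_def is_epi_def
    by (auto simp: is_rep_def)
qed

lemma interval_rep_no_inj_coresolution_0:
  assumes ks: "kupisch_series n c" and "inj_top c k < i" and "i \<le> k" and "k < n"
  shows "\<not> inj_coresolution n c (interval_rep i k :: 'k::field rep) 0 I \<epsilon> \<delta>"
proof
  let ?e = "unit_vec 1 0 :: 'k vec" and ?a = "inj_top c k"
  assume "inj_coresolution n c (interval_rep i k) 0 I \<epsilon> \<delta>"
  hence I0: "is_injective n c (I 0)" and \<epsilon>: "is_hom n (interval_rep i k) (I 0) \<epsilon>"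
    and \<epsilon>_mono: "is_mono n (interval_rep i k) \<epsilon>" and \<epsilon>_epi: "is_epi n (interval_rep i k) (I 0) \<epsilon>"
    unfolding inj_coresolution_0_iff by auto
  have I0_rep: "is_rep n c (I 0)" using I0 unfolding is_injective_def by simp
  have top: "k < ?a + c ?a" using inj_top_le_iff[OF ks assms(4), of ?a] by simp
  obtain g where g: "is_hom n (interval_rep ?a k) (I 0) g" and g\<epsilon>: "\<And>l. i \<le> l \<Longrightarrow> l \<le> k \<Longrightarrow> g l = \<epsilon> l"
    using injective_extend_from_interval[OF ks I0 _ assms(3,4) top \<epsilon>] assms(2) by auto
  define j where "j = i - 1"
  have j: "?a \<le> j" "j < i" "j \<le> k" using assms(2,3) unfolding j_def by auto
  have gj: "g j \<in> carrier_mat (dims (I 0) j) 1"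
    using is_hom_carrier[OF g, of j] j assms(4) by (simp add: interval_dim_def)
  have "j < n" and "g j *\<^sub>v ?e \<in> carrier_vec (dims (I 0) j)" using j assms(4) gj by auto
  then obtain v where "v \<in> carrier_vec (interval_dim i k j)" and "\<epsilon> j *\<^sub>v v = g j *\<^sub>v ?e"
    using \<epsilon>_epi unfolding is_epi_def dims_interval_rep by blast
  moreover have "interval_dim i k j = 0" using j by (simp add: interval_dim_def)
  ultimately have gj_e: "g j *\<^sub>v ?e = 0\<^sub>v (dims (I 0) j)"
    using mult_mat_vec_zero_cols is_hom_carrier[OF \<epsilon> \<open>j < n\<close>] by (metis dims_interval_rep)
  have "g k = path_map (I 0) j (k - j) * g j"
    using interval_hom_path_map[OF interval_rep_is_rep[OF ks assms(4) top] I0_rep g, of j "k - j"] j assms(4)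
    by simp
  hence "\<epsilon> k *\<^sub>v ?e = 0\<^sub>v (dim_row (\<epsilon> k))"
    using g\<epsilon>[of k] assms(3,4) gj gj_e path_map_carrier[OF I0_rep, of j "k - j"] j
      mult_mat_zero_vec is_hom_carrier[OF \<epsilon>, of k] by simp
  thus False using interval_mono_nonzero[OF \<epsilon>_mono assms(3)] assms(4) by simp
qed

text \<open>Since \<open>\<delta> \<circ> \<epsilon> = 0\<close>, the value \<open>\<delta> (g (Suc a) e)\<close> is killed by the path to \<open>i\<close>; by injectivity of
  \<open>I1\<close> it comes from vertex \<open>a\<close>, and the chase through the epimorphism \<open>\<delta>\<close> lifts \<open>g (Suc a) e\<close> itself.\<close>
lemma coresolution_value_lifts:
  fixes I0 I1 :: "'k::field rep"
  assumes ks: "kupisch_series n c" and I0: "is_rep n c I0" and I1: "is_injective n c I1"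
    and \<epsilon>: "is_hom n (interval_rep i k) I0 \<epsilon>" and \<delta>: "is_hom n I0 I1 \<delta>" and \<delta>_epi: "is_epi n I0 I1 \<delta>"
    and exact: "exact_at n (interval_rep i k) I0 I1 \<epsilon> \<delta>"
    and E: "is_rep n c (interval_rep (Suc a) k :: 'k rep)"
    and g: "is_hom n (interval_rep (Suc a) k) I0 g" and g\<epsilon>: "\<And>l. i \<le> l \<Longrightarrow> l \<le> k \<Longrightarrow> g l = \<epsilon> l"
    and "Suc a < i" and "i \<le> k" and "k < n" and "i - 1 < a + c a"
  obtains y where "y \<in> carrier_vec (dims I0 a)" and "maps I0 a *\<^sub>v y = g (Suc a) *\<^sub>v unit_vec 1 0"
proof -
  let ?e = "unit_vec 1 0 :: 'k vec"
  have I1_rep: "is_rep n c I1" using I1 unfolding is_injective_def by simp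
  have ga: "g (Suc a) \<in> carrier_mat (dims I0 (Suc a)) 1"
    using is_hom_carrier[OF g, of "Suc a"] assms(11-13) by (simp add: interval_dim_def)
  define x where "x = g (Suc a) *\<^sub>v ?e"
  have x: "x \<in> carrier_vec (dims I0 (Suc a))" unfolding x_def using ga by simp
  have P0: "path_map I0 (Suc a) (i - Suc a) \<in> carrier_mat (dims I0 i) (dims I0 (Suc a))"
    and P1: "path_map I1 (Suc a) (i - Suc a) \<in> carrier_mat (dims I1 i) (dims I1 (Suc a))"
    using path_map_carrier[OF I0, of "Suc a" "i - Suc a"] path_map_carrier[OF I1_rep, of "Suc a" "i - Suc a"]
      assms(11-13) by auto
  have \<delta>a: "\<delta> (Suc a) \<in> carrier_mat (dims I1 (Suc a)) (dims I0 (Suc a))"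
    and \<delta>i: "\<delta> i \<in> carrier_mat (dims I1 i) (dims I0 i)"
    using is_hom_carrier[OF \<delta>, of "Suc a"] is_hom_carrier[OF \<delta>, of i] assms(11-13) by auto
  have "path_map I1 (Suc a) (i - Suc a) *\<^sub>v (\<delta> (Suc a) *\<^sub>v x) = (path_map I1 (Suc a) (i - Suc a) * \<delta> (Suc a)) *\<^sub>v x"
    using assoc_mult_mat_vec[OF P1 \<delta>a x] by simp
  also have "path_map I1 (Suc a) (i - Suc a) * \<delta> (Suc a) = \<delta> i * path_map I0 (Suc a) (i - Suc a)"
    using path_map_hom_commute[OF I0 I1_rep \<delta>, of "Suc a" "i - Suc a"] assms(11-13) by simp
  also have "\<dots> *\<^sub>v x = \<delta> i *\<^sub>v (path_map I0 (Suc a) (i - Suc a) *\<^sub>v x)"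
    using assoc_mult_mat_vec[OF \<delta>i P0 x] .
  also have "path_map I0 (Suc a) (i - Suc a) *\<^sub>v x = \<epsilon> i *\<^sub>v ?e"
    using interval_hom_path_map[OF E I0 g, of "Suc a" "i - Suc a"] g\<epsilon>[of i] assms(11-13) P0 ga
    unfolding x_def by simp
  also have "\<delta> i *\<^sub>v (\<epsilon> i *\<^sub>v ?e) = 0\<^sub>v (dims I1 i)"
    using exact assms(12,13) is_hom_carrier[OF \<epsilon>, of i] unfolding exact_at_def
    by (auto simp: interval_dim_def)
  finally have killed:
    "path_map I1 (Suc a) (i - 1 - a) *\<^sub>v (\<delta> (Suc a) *\<^sub>v x) = 0\<^sub>v (dims I1 (Suc (i - 1)))"
    using assms(11) by simp
  have "Suc a \<le> i - 1" "i - 1 < n" "\<delta> (Suc a) *\<^sub>v x \<in> carrier_vec (dims I1 (Suc a))"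
    using assms(11-13) x \<delta>a by auto
  then obtain s where "s \<in> carrier_vec (dims I1 a)" "maps I1 a *\<^sub>v s = \<delta> (Suc a) *\<^sub>v x"
    using injective_vec_in_image_of_maps[OF ks I1 _ _ assms(14) _ killed] by auto
  then obtain y where "y \<in> carrier_vec (dims I0 a)" "maps I0 a *\<^sub>v y = x"
    using exact_lift_along_maps[OF I0 I1_rep \<epsilon> \<delta> \<delta>_epi exact _ _ x] assms(11-13)
    by (auto simp: interval_dim_def)
  thus thesis using that unfolding x_def by blast
qed

lemma interval_rep_no_inj_coresolution_1:
  assumes ks: "kupisch_series n c" and tops: "inj_top c (i - 1) < inj_top c k"
    and "inj_top c k < i" and "i \<le> k" and "k < n"
  shows "\<not> inj_coresolution n c (interval_rep i k :: 'k::field rep) 1 I \<epsilon> \<delta>"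
proof
  let ?e = "unit_vec 1 0 :: 'k vec"
  assume "inj_coresolution n c (interval_rep i k) 1 I \<epsilon> \<delta>"
  hence I0: "is_injective n c (I 0)" and I1: "is_injective n c (I 1)"
    and \<epsilon>: "is_hom n (interval_rep i k) (I 0) \<epsilon>" and \<epsilon>_mono: "is_mono n (interval_rep i k) \<epsilon>"
    and \<delta>: "is_hom n (I 0) (I 1) (\<delta> 0)" and exact: "exact_at n (interval_rep i k) (I 0) (I 1) \<epsilon> (\<delta> 0)"
    and \<delta>_epi: "is_epi n (I 0) (I 1) (\<delta> 0)"
    unfolding inj_coresolution_1_iff by auto
  have I0_rep: "is_rep n c (I 0)" using I0 unfolding is_injective_def by simp
  obtain a where a: "inj_top c k = Suc a" using tops by (cases "inj_top c k") auto
  have top: "k < Suc a + c (Suc a)" using inj_top_le_iff[OF ks assms(5), of "Suc a"] a by simp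
  have below_top: "a + c a \<le> k" using inj_top_le_iff[OF ks assms(5), of a] a by simp
  have top_i: "i - 1 < a + c a" using inj_top_le_iff[OF ks, of "i - 1" a] tops a assms(4,5) by simp
  have E: "is_rep n c (interval_rep (Suc a) k :: 'k rep)" by (rule interval_rep_is_rep[OF ks assms(5) top])
  obtain g where g: "is_hom n (interval_rep (Suc a) k) (I 0) g"
    and g\<epsilon>: "\<And>l. i \<le> l \<Longrightarrow> l \<le> k \<Longrightarrow> g l = \<epsilon> l"
    using injective_extend_from_interval[OF ks I0 _ assms(4,5) top \<epsilon>] a assms(3) by auto
  obtain y where y: "y \<in> carrier_vec (dims (I 0) a)" and y_g: "maps (I 0) a *\<^sub>v y = g (Suc a) *\<^sub>v ?e"
    using coresolution_value_lifts[OF ks I0_rep I1 \<epsilon> \<delta> \<delta>_epi exact E g g\<epsilon> _ assms(4,5) top_i] a assms(3)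
    by auto
  have "g k *\<^sub>v ?e = path_map (I 0) a (k - a) *\<^sub>v y"
  proof -
    have P: "path_map (I 0) (Suc a) (k - Suc a) \<in> carrier_mat (dims (I 0) k) (dims (I 0) (Suc a))"
      using path_map_carrier[OF I0_rep, of "Suc a" "k - Suc a"] a assms(3-5) by simp
    have M: "maps (I 0) a \<in> carrier_mat (dims (I 0) (Suc a)) (dims (I 0) a)"
      using is_rep_maps_carrier[OF I0_rep, of a] a assms(3-5) by simp
    have "g k = path_map (I 0) (Suc a) (k - Suc a) * g (Suc a)"
      using interval_hom_path_map[OF E I0_rep g, of "Suc a" "k - Suc a"] a assms(3-5) by simp
    hence "g k *\<^sub>v ?e = path_map (I 0) (Suc a) (k - Suc a) *\<^sub>v (maps (I 0) a *\<^sub>v y)"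
      using y_g P is_hom_carrier[OF g, of "Suc a"] a assms(3-5) by (simp add: interval_dim_def)
    also have "\<dots> = path_map (I 0) a (k - a) *\<^sub>v y"
      using path_map_Suc_left[OF I0_rep, of a "k - Suc a"] a assms(3-5) P M y by (simp add: Suc_diff_Suc)
    finally show ?thesis .
  qed
  also have "\<dots> = 0\<^sub>v (dims (I 0) k)"
    using path_map_eq_zero[OF I0_rep below_top assms(5)] y by (auto intro!: eq_vecI simp: scalar_prod_def)
  finally have "\<epsilon> k *\<^sub>v ?e = 0\<^sub>v (dim_row (\<epsilon> k))"
    using g\<epsilon>[of k] assms(4) is_hom_carrier[OF \<epsilon> assms(5)] by simp
  thus False using interval_mono_nonzero[OF \<epsilon>_mono assms(4)] assms(5) by simp
qed

lemma interval_exact: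
  assumes "a < i" and "i \<le> k"
  shows "exact_at n (interval_rep i k :: 'k::field rep) (interval_rep a k) (interval_rep a (i - 1))
           (interval_map i k a k) (interval_map a k a (i - 1))"
  unfolding exact_at_def
proof (intro allI impI ballI)
  fix l and w :: "'k vec" assume w: "w \<in> carrier_vec (dims (interval_rep a k :: 'k rep) l)"
  consider "interval_dim a k l = 0" | "a \<le> l" "l < i" "l \<le> k" | "i \<le> l" "l \<le> k"
    by (fastforce simp: interval_dim_def)
  thus "interval_map a k a (i - 1) l *\<^sub>v w = 0\<^sub>v (dims (interval_rep a (i - 1) :: 'k rep) l) \<longleftrightarrow>
        (\<exists>v\<in>carrier_vec (dims (interval_rep i k :: 'k rep) l). interval_map i k a k l *\<^sub>v v = w)"
  proof cases
    case 1
    hence "interval_dim a (i - 1) l = 0" "interval_dim i k l = 0" "w = 0\<^sub>v 0"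
      using assms w by (auto simp: interval_dim_def split: if_splits)
    thus ?thesis using 1 by (auto simp: interval_map_def intro!: eq_vecI bexI[of _ "0\<^sub>v 0"])
  next
    case 2
    hence "interval_dim a k l = 1" "interval_dim a (i - 1) l = 1" "interval_dim i k l = 0"
      by (auto simp: interval_dim_def)
    thus ?thesis using w by (auto simp: interval_map_def mult_mat_vec_zero_cols) (use zero_carrier_vec in blast)
  next
    case 3
    hence "interval_dim a k l = 1" "interval_dim a (i - 1) l = 0" "interval_dim i k l = 1"
      using assms by (auto simp: interval_dim_def)
    thus ?thesis using w by (auto simp: interval_map_def intro!: eq_vecI)
  qed
qed

lemma interval_rep_inj_coresolution_1:
  assumes ks: "kupisch_series n c" and "inj_top c k < i" and "i \<le> k" and "k < n"
    and tops: "inj_top c (i - 1) = inj_top c k"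
  shows "inj_coresolution n c (interval_rep i k :: 'k::field rep) 1
           (\<lambda>t. if t = 0 then interval_rep (inj_top c k) k else interval_rep (inj_top c k) (i - 1))
           (interval_map i k (inj_top c k) k) (\<lambda>_. interval_map (inj_top c k) k (inj_top c k) (i - 1))"
proof -
  have "is_injective n c (interval_rep (inj_top c k) k :: 'k rep)"
    and "is_injective n c (interval_rep (inj_top c k) (i - 1) :: 'k rep)"
    using interval_rep_inj_top_injective[OF ks, of k] interval_rep_inj_top_injective[OF ks, of "i - 1"]
      tops assms(3,4) by (auto simp: less_imp_diff_less)
  thus ?thesis
    unfolding inj_coresolution_1_iff
    using assms(2,3) interval_exact[OF assms(2,3), of n]
    by (auto intro: interval_map_hom interval_map_mono interval_map_epi)
qed

lemma Inf_enat_image_eq_one_iff: "Inf (enat ` S) = 1 \<longleftrightarrow> 1 \<in> S \<and> 0 \<notin> S"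
proof
  assume h: "Inf (enat ` S) = 1"
  hence "S \<noteq> {}" by (auto simp: top_enat_def)
  hence "Inf (enat ` S) \<in> enat ` S" unfolding Inf_enat_def by (auto intro: LeastI)
  moreover have "0 \<notin> S"
  proof
    assume "0 \<in> S"
    hence "Inf (enat ` S) \<le> enat 0" by (intro Inf_lower) auto
    thus False using h by (simp add: zero_enat_def[symmetric])
  qed
  ultimately show "1 \<in> S \<and> 0 \<notin> S" using h by (auto simp: one_enat_def)
next
  assume h: "1 \<in> S \<and> 0 \<notin> S"
  have "enat 1 \<le> x" if "x \<in> enat ` S" for x using that h by (auto simp: Suc_le_eq intro!: gr0I)
  hence "enat 1 \<le> Inf (enat ` S)" by (rule Inf_greatest)
  moreover have "Inf (enat ` S) \<le> enat 1" using h by (intro Inf_lower) auto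
  ultimately show "Inf (enat ` S) = 1" by (simp add: one_enat_def)
qed

lemma inj_dim_interval_rep_eq_one_iff:
  assumes ks: "kupisch_series n c" and "i \<le> k" and "k < n" and "k < i + c i"
  shows "inj_dim n c (interval_rep i k :: 'k::field rep) = 1 \<longleftrightarrow>
           inj_top c k < i \<and> inj_top c (i - 1) = inj_top c k"
proof -
  let ?S = "{m. \<exists>I \<epsilon> \<delta>. inj_coresolution n c (interval_rep i k :: 'k rep) m I \<epsilon> \<delta>}"
  have dim: "inj_dim n c (interval_rep i k :: 'k rep) = 1 \<longleftrightarrow> 1 \<in> ?S \<and> 0 \<notin> ?S"
    unfolding inj_dim_def by (rule Inf_enat_image_eq_one_iff)
  have "inj_top c k \<le> i" using inj_top_le_iff[OF ks assms(3)] assms(4) by simp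
  moreover have "inj_top c (i - 1) \<le> inj_top c k" if "inj_top c k < i"
    using inj_top_le_iff[OF ks, of "i - 1" "inj_top c k"] inj_top_le_iff[OF ks assms(3), of "inj_top c k"]
      that assms(2,3) by simp
  ultimately consider "inj_top c k = i"
    | "inj_top c k < i" "inj_top c (i - 1) = inj_top c k"
    | "inj_top c k < i" "inj_top c (i - 1) < inj_top c k"
    by fastforce
  thus ?thesis
  proof cases
    case 1
    hence "0 \<in> ?S"
      using injective_inj_coresolution_0 interval_rep_inj_top_injective[OF ks assms(3)] by fastforce
    thus ?thesis using dim 1 by simp
  next
    case 2
    hence "1 \<in> ?S" "0 \<notin> ?S"
      using interval_rep_inj_coresolution_1[OF ks _ assms(2,3)]
        interval_rep_no_inj_coresolution_0[OF ks _ assms(2,3)] by blast+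
    thus ?thesis using dim 2 by simp
  next
    case 3
    hence "1 \<notin> ?S" using interval_rep_no_inj_coresolution_1[OF ks _ _ assms(2,3)] by blast
    thus ?thesis using dim 3 by simp
  qed
qed

theorem mainTheorem6:
  fixes n :: nat and c :: "nat \<Rightarrow> nat" and i :: nat
    and d :: "nat \<Rightarrow> nat"
  assumes "kupisch_series n c"
    and "\<And>j. d j = total_dim n (inj_rep c j :: 'k::field rep)"
    and "i < n"
  shows "inj_dim n c (proj_rep c i :: 'k rep) = 1 \<longleftrightarrow>
           (c i < d (i + c i - 1) \<and>
            d (i + c i - 1) - c i = (if i = 0 then 0 else d (i - 1)))"
proof -
  note ks = assms(1)
  define k where "k = i + c i - 1"
  have ci: "1 \<le> c i" using kupisch_series_pos[OF ks assms(3)] .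
  have k: "i \<le> k" "k < n" "k < i + c i"
    using ci kupisch_series_end_le[OF ks assms(3)] unfolding k_def by auto
  have d_eq: "d j = Suc j - inj_top c j" if "j < n" for j
    by (simp add: assms(2) inj_rep_eq_interval_rep[OF ks that] total_dim_interval_rep[OF that])
  have "inj_dim n c (proj_rep c i :: 'k rep) = 1 \<longleftrightarrow>
          inj_top c k < i \<and> inj_top c (i - 1) = inj_top c k"
    using inj_dim_interval_rep_eq_one_iff[OF ks k] by (simp add: proj_rep_eq_interval_rep[of c i, OF ci] k_def)
  moreover have "c i < d k \<and> d k - c i = (if i = 0 then 0 else d (i - 1)) \<longleftrightarrow>
          inj_top c k < i \<and> inj_top c (i - 1) = inj_top c k"
  proof -
    have "inj_top c k \<le> i" using inj_top_le_iff[OF ks k(2)] k(3) by simp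
    moreover have "inj_top c (i - 1) \<le> i - 1" using inj_top_le[OF ks, of "i - 1"] assms(3) by simp
    moreover have "c i = Suc k - i" using ci unfolding k_def by simp
    ultimately show ?thesis using d_eq[OF k(2)] d_eq[of "i - 1"] assms(3) k(1) by (cases "i = 0") (auto, linarith)
  qed
  ultimately show ?thesis unfolding k_def by simp
qed

end
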